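(* Let $G$ be a connected graph with $\hat\delta$-thin triangles, let $u,v$ be arbitrary vertices and $\lambda$ a fixed real number. Then there exists a ball $B$ of radius $2\hat\delta$ such that for every pair of vertices $x,y$ with $d(x,u)<\lambda\,d(u,v)$ and $d(y,v)<(1-\lambda)\,d(u,v)$, every shortest path from $x$ to $y$ intersects $B$.
   Context: $G$ is regarded as a geodesic metric space (each edge an interval of length 1), with distance $d$. For vertices $a,b,c$ let $(b.c)_a=\tfrac12(d(a,b)+d(a,c)-d(b,c))$. $G$ has $\hat\delta$-thin triangles if for every triple of vertices $x_1,x_2,x_3$ and every choice of shortest paths $p_{i,j}$ between $x_i$ and $x_j$, for every $i$ with $\{j,\ell\}$ the other two indices and every $k$ with $1\le k\le (x_j.x_\ell)_{x_i}$, the points $y_k\in p_{i,j}$ and $y'_k\in p_{i,\ell}$ at distance $k$ from $x_i$ satisfy $d(y_k,y'_k)\le\hat\delta$. *)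

theory Defs
  imports Complex_Main
begin

definition graph :: "'a set \<Rightarrow> ('a \<Rightarrow> 'a \<Rightarrow> bool) \<Rightarrow> bool" where
  "graph V E \<longleftrightarrow> (\<forall>a b. E a b \<longrightarrow> a \<in> V \<and> b \<in> V \<and> E b a \<and> a \<noteq> b)"

definition walk :: "'a set \<Rightarrow> ('a \<Rightarrow> 'a \<Rightarrow> bool) \<Rightarrow> 'a list \<Rightarrow> bool" where
  "walk V E p \<longleftrightarrow> p \<noteq> [] \<and> set p \<subseteq> V \<and> (\<forall>i. Suc i < length p \<longrightarrow> E (p ! i) (p ! Suc i))"

definition walk_between :: "'a set \<Rightarrow> ('a \<Rightarrow> 'a \<Rightarrow> bool) \<Rightarrow> 'a list \<Rightarrow> 'a \<Rightarrow> 'a \<Rightarrow> bool" where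
  "walk_between V E p x y \<longleftrightarrow> walk V E p \<and> hd p = x \<and> last p = y"

definition connected_graph :: "'a set \<Rightarrow> ('a \<Rightarrow> 'a \<Rightarrow> bool) \<Rightarrow> bool" where
  "connected_graph V E \<longleftrightarrow> V \<noteq> {} \<and> (\<forall>x\<in>V. \<forall>y\<in>V. \<exists>p. walk_between V E p x y)"

definition gdist :: "'a set \<Rightarrow> ('a \<Rightarrow> 'a \<Rightarrow> bool) \<Rightarrow> 'a \<Rightarrow> 'a \<Rightarrow> real" where
  "gdist V E x y = real (LEAST n. \<exists>p. walk_between V E p x y \<and> length p = Suc n)"

definition shortest_path :: "'a set \<Rightarrow> ('a \<Rightarrow> 'a \<Rightarrow> bool) \<Rightarrow> 'a list \<Rightarrow> 'a \<Rightarrow> 'a \<Rightarrow> bool" where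
  "shortest_path V E p x y \<longleftrightarrow> walk_between V E p x y \<and> real (length p - 1) = gdist V E x y"

definition gromov :: "'a set \<Rightarrow> ('a \<Rightarrow> 'a \<Rightarrow> bool) \<Rightarrow> 'a \<Rightarrow> 'a \<Rightarrow> 'a \<Rightarrow> real" where
  "gromov V E a b c = (gdist V E a b + gdist V E a c - gdist V E b c) / 2"

text \<open>Shortest paths p_{i,j} are taken oriented from x_i;
  reversing a shortest path gives a shortest path, so quantifying over all
  ordered triples covers every index i.  The point at distance k from x_i on a
  shortest path starting at x_i is its k-th vertex.\<close>
definition thin_triangles :: "'a set \<Rightarrow> ('a \<Rightarrow> 'a \<Rightarrow> bool) \<Rightarrow> real \<Rightarrow> bool" where
  "thin_triangles V E \<delta> \<longleftrightarrow>
     (\<forall>x1\<in>V. \<forall>x2\<in>V. \<forall>x3\<in>V. \<forall>p q k.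
        shortest_path V E p x1 x2 \<longrightarrow> shortest_path V E q x1 x3 \<longrightarrow>
        1 \<le> real k \<longrightarrow> real k \<le> gromov V E x1 x2 x3 \<longrightarrow>
        gdist V E (p ! k) (q ! k) \<le> \<delta>)"

text \<open>Points of the geodesic metric graph (each edge an interval of length 1):
  a triple (a,b,t) is the point of the edge ab at distance t from a;
  vertices are represented as (a,a,0).\<close>
definition mpoints :: "'a set \<Rightarrow> ('a \<Rightarrow> 'a \<Rightarrow> bool) \<Rightarrow> ('a \<times> 'a \<times> real) set" where
  "mpoints V E = {(a, a, 0) | a. a \<in> V} \<union> {(a, b, t) | a b t. E a b \<and> 0 \<le> t \<and> t \<le> 1}"

fun vpdist :: "'a set \<Rightarrow> ('a \<Rightarrow> 'a \<Rightarrow> bool) \<Rightarrow> 'a \<times> 'a \<times> real \<Rightarrow> 'a \<Rightarrow> real" where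
  "vpdist V E (a, b, s) w = min (s + gdist V E a w) ((1 - s) + gdist V E b w)"

text \<open>Distance in the metric graph between two points: a geodesic either stays in
  a common edge, or leaves the edge of the first point through one of its endpoints.\<close>
fun mdist :: "'a set \<Rightarrow> ('a \<Rightarrow> 'a \<Rightarrow> bool) \<Rightarrow> 'a \<times> 'a \<times> real \<Rightarrow> 'a \<times> 'a \<times> real \<Rightarrow> real" where
  "mdist V E (a, b, s) Q =
     (let through = min (s + vpdist V E Q a) ((1 - s) + vpdist V E Q b) in
      case Q of (c, e, t) \<Rightarrow>
        (if c = a \<and> e = b then min through \<bar>s - t\<bar>
         else if c = b \<and> e = a then min through \<bar>s - (1 - t)\<bar>
         else through))"

definition path_points :: "'a list \<Rightarrow> ('a \<times> 'a \<times> real) set" where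
  "path_points p = {(v, v, 0) | v. v \<in> set p} \<union>
     {(p ! i, p ! Suc i, t) | i t. Suc i < length p \<and> 0 \<le> t \<and> t \<le> 1}"

end

theory Submission
  imports Defs
begin

text \<open>Let c be the vertex at distance k = \<lfloor>\<lambda> d(u,v)\<rfloor> from u on a geodesic from u to v, and q a
  geodesic from u to y. Since d(y,v) < (1 - \<lambda>) d(u,v), k lies below the Gromov product (v.y)_u,
  so thinness of the triangle u v y puts c within \<hat>\<delta> of the vertex c' of q at distance k from u.
  Since d(x,u) \<le> k, the distance d(y,c') = d(u,y) - k lies below (u.x)_y, so thinness of the
  triangle y u x puts c' within \<hat>\<delta> of the vertex at the same distance from y on the reversed
  geodesic from x to y. Hence that geodesic passes within 2\<hat>\<delta> of c.\<close>

lemma gdist_le_length: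
  assumes "walk_between V E p a b"
  shows "gdist V E a b \<le> real (length p - 1)"
proof -
  have "p \<noteq> []" using assms unfolding walk_between_def walk_def by auto
  then have "(LEAST n. \<exists>p. walk_between V E p a b \<and> length p = Suc n) \<le> length p - 1"
    by (intro Least_le exI[of _ p]) (use assms in simp)
  then show ?thesis unfolding gdist_def by simp
qed

lemma gdist_self:
  assumes "a \<in> V"
  shows "gdist V E a a = 0"
proof -
  have "walk_between V E [a] a a" using assms unfolding walk_between_def walk_def by auto
  from gdist_le_length[OF this] show ?thesis unfolding gdist_def by simp
qed

lemma shortest_pathD:
  assumes "shortest_path V E p a b"
  shows "real (length p - 1) = gdist V E a b" and "p \<noteq> []" and "set p \<subseteq> V"
    and "hd p = a" and "last p = b"
  using assms unfolding shortest_path_def walk_between_def walk_def by auto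

lemma shortest_path_nth_in_V:
  assumes "shortest_path V E p a b" "i < length p"
  shows "p ! i \<in> V"
  using shortest_pathD(3)[OF assms(1)] nth_mem[OF assms(2)] by blast

lemma shortest_path_exists:
  assumes "connected_graph V E" "a \<in> V" "b \<in> V"
  obtains p where "shortest_path V E p a b"
proof -
  obtain p0 where p0: "walk_between V E p0 a b"
    using assms unfolding connected_graph_def by blast
  then have "p0 \<noteq> []" unfolding walk_between_def walk_def by auto
  with p0 have "\<exists>n p. walk_between V E p a b \<and> length p = Suc n"
    by (intro exI[of _ "length p0 - 1"] exI[of _ p0]) auto
  from LeastI_ex[OF this] obtain p where "walk_between V E p a b"
    "length p = Suc (LEAST n. \<exists>p. walk_between V E p a b \<and> length p = Suc n)"
    by blast
  then have "shortest_path V E p a b" unfolding shortest_path_def gdist_def by simp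
  then show thesis by (rule that)
qed

lemma walk_rev:
  assumes "graph V E" "walk V E p"
  shows "walk V E (rev p)"
  unfolding walk_def
proof (intro conjI allI impI)
  show "rev p \<noteq> []" "set (rev p) \<subseteq> V" using assms(2) unfolding walk_def by auto
  fix i assume i: "Suc i < length (rev p)"
  then have "Suc (length p - Suc (Suc i)) = length p - Suc i" by auto
  moreover have "E (p ! (length p - Suc (Suc i))) (p ! Suc (length p - Suc (Suc i)))"
    using assms(2) i unfolding walk_def by auto
  ultimately have "E (p ! (length p - Suc i)) (p ! (length p - Suc (Suc i)))"
    using assms(1) unfolding graph_def by metis
  then show "E (rev p ! i) (rev p ! Suc i)" using i by (simp add: rev_nth)
qed

lemma walk_between_rev:
  assumes "graph V E" "walk_between V E p a b"
  shows "walk_between V E (rev p) b a"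
proof -
  have "walk V E p" "p \<noteq> []" "hd p = a" "last p = b"
    using assms(2) unfolding walk_between_def walk_def by auto
  then show ?thesis using walk_rev[OF assms(1)] unfolding walk_between_def
    by (simp add: hd_rev last_rev)
qed

lemma walk_append:
  assumes "walk V E p" "walk V E (b # q)" "last p = b"
  shows "walk V E (p @ q)"
  unfolding walk_def
proof (intro conjI allI impI)
  show "p @ q \<noteq> []" "set (p @ q) \<subseteq> V" using assms unfolding walk_def by auto
  fix i assume i: "Suc i < length (p @ q)"
  have "p \<noteq> []" using assms(1) unfolding walk_def by auto
  have bq: "E ((b # q) ! j) ((b # q) ! Suc j)" if "Suc j < length (b # q)" for j
    using assms(2) that unfolding walk_def by blast
  consider "Suc i < length p" | "Suc i = length p" | "length p < Suc i" by linarith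
  then show "E ((p @ q) ! i) ((p @ q) ! Suc i)"
  proof cases
    case 1
    then show ?thesis using assms(1) by (simp add: nth_append walk_def)
  next
    case 2
    then have "p ! i = b" using assms(3) \<open>p \<noteq> []\<close> by (metis diff_Suc_1 last_conv_nth)
    with 2 bq[of 0] i show ?thesis by (simp add: nth_append)
  next
    case 3
    then have "Suc i - length p = Suc (i - length p)" by auto
    with 3 bq[of "Suc (i - length p)"] i show ?thesis by (simp add: nth_append)
  qed
qed

lemma gdist_commute:
  assumes "graph V E" "connected_graph V E" "a \<in> V" "b \<in> V"
  shows "gdist V E a b = gdist V E b a"
proof -
  have "gdist V E x y \<le> gdist V E y x" if xy: "x \<in> V" "y \<in> V" for x y
  proof -
    obtain p where p: "shortest_path V E p y x"
      using shortest_path_exists[OF assms(2) xy(2,1)] .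
    then have "gdist V E x y \<le> real (length (rev p) - 1)"
      using gdist_le_length[OF walk_between_rev[OF assms(1)]] unfolding shortest_path_def by blast
    then show ?thesis using shortest_pathD(1)[OF p] by simp
  qed
  then show ?thesis using assms(3,4) by (meson order_antisym)
qed

lemma shortest_path_rev:
  assumes "graph V E" "connected_graph V E" "shortest_path V E p a b"
  shows "shortest_path V E (rev p) b a"
proof -
  have p: "walk_between V E p a b" "real (length p - 1) = gdist V E a b"
    using assms(3) unfolding shortest_path_def by auto
  have "a \<in> V" "b \<in> V"
    using shortest_pathD(2-5)[OF assms(3)] hd_in_set last_in_set by blast+
  then have "gdist V E a b = gdist V E b a" using gdist_commute[OF assms(1,2)] by blast
  with p walk_between_rev[OF assms(1)] show ?thesis unfolding shortest_path_def by simp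
qed

lemma gdist_triangle:
  assumes "connected_graph V E" "a \<in> V" "b \<in> V" "c \<in> V"
  shows "gdist V E a c \<le> gdist V E a b + gdist V E b c"
proof -
  obtain p where p: "shortest_path V E p a b" using shortest_path_exists[OF assms(1,2,3)] .
  obtain q where q: "shortest_path V E q b c" using shortest_path_exists[OF assms(1,3,4)] .
  obtain q' where q': "q = b # q'"
    using shortest_pathD(2,4)[OF q] by (cases q) auto
  have "walk V E p" "walk V E (b # q')" "last p = b"
    using p q q' unfolding shortest_path_def walk_between_def by auto
  then have "walk V E (p @ q')" by (rule walk_append)
  moreover have "hd (p @ q') = a" "last (p @ q') = c"
    using shortest_pathD(2,4,5)[OF p] shortest_pathD(5)[OF q] q' by auto
  ultimately have "gdist V E a c \<le> real (length (p @ q') - 1)"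
    by (intro gdist_le_length) (simp add: walk_between_def)
  also have "\<dots> = real (length p - 1) + real (length q - 1)"
    using shortest_pathD(2)[OF p] q' by (cases p) auto
  finally show ?thesis using shortest_pathD(1)[OF p] shortest_pathD(1)[OF q] by simp
qed

lemma gromov_le_gdist:
  assumes "graph V E" "connected_graph V E" "a \<in> V" "b \<in> V" "c \<in> V"
  shows "gromov V E a b c \<le> gdist V E a b" and "gromov V E a b c \<le> gdist V E a c"
  using gdist_triangle[OF assms(2,3,4,5)] gdist_triangle[OF assms(2,3,5,4)]
    gdist_commute[OF assms(1,2,4,5)]
  unfolding gromov_def by simp_all

lemma gromov_gt_if_gdist_lt:
  assumes "graph V E" "connected_graph V E" "u \<in> V" "v \<in> V" "y \<in> V"
    and "gdist V E y v < (1 - lam) * gdist V E u v"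
  shows "lam * gdist V E u v < gromov V E u v y"
  using assms gdist_triangle[OF assms(2,3,5,4)] gdist_commute[OF assms(1,2,4,5)]
  unfolding gromov_def by (simp add: algebra_simps)

lemma thin_trianglesD:
  assumes "thin_triangles V E \<delta>" "0 \<le> \<delta>" "x1 \<in> V" "x2 \<in> V" "x3 \<in> V"
    and "shortest_path V E p x1 x2" "shortest_path V E q x1 x3"
    and "real k \<le> gromov V E x1 x2 x3"
  shows "gdist V E (p ! k) (q ! k) \<le> \<delta>"
proof (cases "k = 0")
  case True
  then have "p ! k = x1" "q ! k = x1"
    using shortest_pathD(2,4)[OF assms(6)] shortest_pathD(2,4)[OF assms(7)]
    by (auto simp: hd_conv_nth)
  then show ?thesis using gdist_self[OF assms(3)] assms(2) by simp
next
  case False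
  then show ?thesis using assms unfolding thin_triangles_def by auto
qed

text \<open>Thinness only constrains indices k \<ge> 1, so it does not force \<open>0 \<le> \<delta>\<close> by itself;
  the degenerate triangle a b b yields it once a \<noteq> b.\<close>

lemma thin_triangles_nonneg:
  assumes "thin_triangles V E \<delta>" "connected_graph V E" "a \<in> V" "b \<in> V"
    and "0 < gdist V E a b"
  shows "0 \<le> \<delta>"
proof -
  obtain p where p: "shortest_path V E p a b" using shortest_path_exists[OF assms(2-4)] .
  then have "1 < length p" using shortest_pathD(1)[OF p] assms(5) by linarith
  then have "real 1 \<le> gdist V E a b" using shortest_pathD(1)[OF p] by linarith
  then have gromov: "real 1 \<le> gromov V E a b b"
    using gdist_self[OF assms(4)]
    unfolding gromov_def by simp
  have "gdist V E (p ! 1) (p ! 1) \<le> \<delta>"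
    using assms(1)[unfolded thin_triangles_def, rule_format, OF assms(3,4,4) p p _ gromov]
    by simp
  then show ?thesis
    using gdist_self shortest_path_nth_in_V[OF p \<open>1 < length p\<close>] by metis
qed

lemma geodesic_vertex_near_shortest_path:
  assumes G: "graph V E" and C: "connected_graph V E" and T: "thin_triangles V E \<delta>"
    and "0 \<le> \<delta>" and V: "u \<in> V" "v \<in> V" "x \<in> V" "y \<in> V"
    and pu: "shortest_path V E pu u v" and p: "shortest_path V E p x y"
    and k_gromov: "real k \<le> gromov V E u v y" and x_near: "gdist V E x u \<le> real k"
  shows "\<exists>w\<in>set p. gdist V E (pu ! k) w \<le> 2 * \<delta>"
proof -
  obtain q where q: "shortest_path V E q u y" using shortest_path_exists[OF C V(1,4)] .
  have "real k \<le> real (length q - 1)"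
    using k_gromov gromov_le_gdist(2)[OF G C V(1,2,4)] shortest_pathD(1)[OF q] by linarith
  then have k_q: "k < length q" using shortest_pathD(2)[OF q] by (cases q) auto
  have k_pu: "k < length pu"
    using k_gromov gromov_le_gdist(1)[OF G C V(1,2,4)] shortest_pathD(1,2)[OF pu]
    by (cases pu) auto
  have near1: "gdist V E (pu ! k) (q ! k) \<le> \<delta>"
    using thin_trianglesD[OF T \<open>0 \<le> \<delta>\<close> V(1,2,4) pu q k_gromov] .
  define j where "j = length q - 1 - k"
  have rev_q_j: "rev q ! j = q ! k"
    using k_q unfolding j_def by (simp add: rev_nth Suc_diff_Suc)
  have "real j = gdist V E y u - real k"
    using shortest_pathD(1)[OF q] gdist_commute[OF G C V(1,4)] k_q unfolding j_def by simp
  then have j_gromov: "real j \<le> gromov V E y u x"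
    using gdist_triangle[OF C V(4,3,1)] gdist_commute[OF G C V(1,3)] x_near
    unfolding gromov_def by simp
  have "real j \<le> real (length p - 1)"
    using j_gromov gromov_le_gdist(2)[OF G C V(4,1,3)] shortest_pathD(1)[OF p]
      gdist_commute[OF G C V(3,4)] by linarith
  then have j_p: "j < length p" using shortest_pathD(2)[OF p] by (cases p) auto
  have near2: "gdist V E (q ! k) (rev p ! j) \<le> \<delta>"
    using thin_trianglesD[OF T \<open>0 \<le> \<delta>\<close> V(4,1,3) shortest_path_rev[OF G C q]
        shortest_path_rev[OF G C p] j_gromov] rev_q_j by simp
  have w: "rev p ! j \<in> set p" using j_p by (metis length_rev nth_mem set_rev)
  then have "rev p ! j \<in> V" using shortest_pathD(3)[OF p] by blast
  then have "gdist V E (pu ! k) (rev p ! j) \<le> 2 * \<delta>"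
    using gdist_triangle[OF C _ _, of "pu ! k" "q ! k" "rev p ! j"] near1 near2
      shortest_path_nth_in_V[OF pu k_pu] shortest_path_nth_in_V[OF q k_q] by simp
  with w show ?thesis by blast
qed

lemma mdist_vertex_vertex_le:
  "mdist V E (c, c, 0) (w, w, 0) \<le> gdist V E w c"
  by (simp add: Let_def)

lemma path_points_near_vertex:
  assumes "graph V E" "connected_graph V E" "c \<in> V" "w \<in> V" "w \<in> set p"
    and "gdist V E c w \<le> r"
  shows "\<exists>P\<in>path_points p. mdist V E (c, c, 0) P \<le> r"
proof
  show "(w, w, 0) \<in> path_points p" using assms(5) unfolding path_points_def by blast
  show "mdist V E (c, c, 0) (w, w, 0) \<le> r"
    using mdist_vertex_vertex_le[of V E c w] gdist_commute[OF assms(1-4)] assms(6) by simp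
qed

theorem mainTheorem8:
  fixes V :: "'a set" and E :: "'a \<Rightarrow> 'a \<Rightarrow> bool" and \<delta> lam :: real and u v :: 'a
  assumes "graph V E" and "connected_graph V E" and "thin_triangles V E \<delta>"
    and "u \<in> V" and "v \<in> V"
  shows "\<exists>c\<in>mpoints V E. \<forall>x\<in>V. \<forall>y\<in>V.
           gdist V E x u < lam * gdist V E u v \<longrightarrow>
           gdist V E y v < (1 - lam) * gdist V E u v \<longrightarrow>
           (\<forall>p. shortest_path V E p x y \<longrightarrow>
                (\<exists>P\<in>path_points p. mdist V E c P \<le> 2 * \<delta>))"
proof -
  let ?d = "gdist V E u v"
  obtain pu where pu: "shortest_path V E pu u v" using shortest_path_exists[OF assms(2,4,5)] .
  define k where "k = min (nat \<lfloor>lam * ?d\<rfloor>) (length pu - 1)"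
  have "k < length pu" using shortest_pathD(2)[OF pu] unfolding k_def by (cases pu) auto
  then have c: "pu ! k \<in> V" using shortest_path_nth_in_V[OF pu] by blast
  have "\<exists>P\<in>path_points p. mdist V E (pu ! k, pu ! k, 0) P \<le> 2 * \<delta>"
    if "x \<in> V" "y \<in> V" and x_near: "gdist V E x u < lam * ?d"
      and y_near: "gdist V E y v < (1 - lam) * ?d" and p: "shortest_path V E p x y" for x y p
  proof -
    obtain m where m: "gdist V E x u = real m" unfolding gdist_def by blast
    have gromov: "lam * ?d < gromov V E u v y"
      using gromov_gt_if_gdist_lt[OF assms(1,2,4,5) \<open>y \<in> V\<close> y_near] .
    then have "real m < ?d"
      using x_near m gromov_le_gdist(1)[OF assms(1,2,4,5) \<open>y \<in> V\<close>] by linarith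
    then have "0 \<le> \<delta>" using thin_triangles_nonneg[OF assms(3,2,4,5)] by simp
    have "m \<le> k"
      using x_near m \<open>real m < ?d\<close> shortest_pathD(1)[OF pu] unfolding k_def by linarith
    then have x_k: "gdist V E x u \<le> real k" using m by simp
    have "real k \<le> lam * ?d" using x_near m unfolding k_def by linarith
    then have k_gromov: "real k \<le> gromov V E u v y" using gromov by linarith
    obtain w where "w \<in> set p" "gdist V E (pu ! k) w \<le> 2 * \<delta>"
      using geodesic_vertex_near_shortest_path[OF assms(1-3) \<open>0 \<le> \<delta>\<close> assms(4,5)
          \<open>x \<in> V\<close> \<open>y \<in> V\<close> pu p k_gromov x_k] by blast
    then show ?thesis
      using path_points_near_vertex[OF assms(1,2) c] shortest_pathD(3)[OF p] by blast
  qed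
  moreover have "(pu ! k, pu ! k, 0) \<in> mpoints V E" using c unfolding mpoints_def by blast
  ultimately show ?thesis by blast
qed

end
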